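(* Let $h:(0,1/2)\to\mathbb{R}$, $h(t)=-3t(1-2t)\log\frac{1-2t}{t}-3t+1$, and for $r>0$ let $f_r(t)=\frac{2}{3(1-r-3t)}\log\frac{1-2t}{t}$ and $k_r=(1-r)/3$. Then: (1) For $0<r<1$ and $t\in(0,k_r)\cup(k_r,1/2)$, $f_r'(t)$ and $r-h(t)$ have the same sign; in particular $f_r'(t)=0$ if and only if $h(t)=r$. (2) For any $0<r<1$, the equation $f_r'(t)=0$ has a unique solution $m_0(r)\in(0,k_r)$. The function $f_r$ is decreasing on $(0,m_0(r))$ and increasing on $(m_0(r),k_r)$ and on $(k_r,1/2)$. Furthermore $\lim_{t\downarrow0}f_r(t)=\lim_{t\uparrow k_r}f_r(t)=\lim_{t\uparrow1/2}f_r(t)=\infty$ and $\lim_{t\downarrow k_r}f_r(t)=-\infty$. (3) For all $r\ge1$, $f_r$ is increasing on $(0,1/2)$, and $\lim_{t\downarrow0}f_r(t)=-\infty$, $\lim_{t\uparrow1/2}f_r(t)=\infty$. (4) On $(0,1)$ the map $r\mapsto m_0(r)$ is decreasing and $\lim_{r\uparrow1}m_0(r)=0$. (5) On $(0,1)$ the map $r\mapsto f_r(m_0(r))$ is increasing and $\lim_{r\uparrow1}f_r(m_0(r))=\infty$.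
   Context: For $0<r<1$, $f_r$ is regarded as a function on $(0,k_r)\cup(k_r,1/2)$; for $r\ge 1$, $f_r$ is defined on $(0,1/2)$. *)

theory Defs
  imports "HOL-Analysis.Analysis"
begin

definition h :: "real \<Rightarrow> real" where
  "h t = - 3 * t * (1 - 2 * t) * ln ((1 - 2 * t) / t) - 3 * t + 1"

definition f :: "real \<Rightarrow> real \<Rightarrow> real" where
  "f r t = 2 / (3 * (1 - r - 3 * t)) * ln ((1 - 2 * t) / t)"

definition k :: "real \<Rightarrow> real" where
  "k r = (1 - r) / 3"

definition m0 :: "real \<Rightarrow> real" where
  "m0 r = (THE t. t \<in> {0<..<k r} \<and> deriv (f r) t = 0)"

end

theory Submission
  imports Defs "HOL-Real_Asymp.Real_Asymp"
begin

text \<open>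
  Differentiating gives \<open>f\<^sub>r'(t) = 2 (r - h t) / (3 t (1 - 2t) (1 - r - 3t)\<^sup>2)\<close>, so the
  monotonicity of \<open>f\<^sub>r\<close> is governed by the sign of \<open>r - h t\<close>.  Since
  \<open>h'(t) = -3 (1 - 4t) ln ((1 - 2t)/t)\<close>, the function \<open>h\<close> decreases strictly from \<open>1\<close> on
  \<open>(0, 1/4]\<close> and is \<open>\<le> 0\<close> on \<open>[1/4, 1/2)\<close> (its maximum there is \<open>h (1/3) = 0\<close>).  Hence
  every level \<open>0 < r < 1\<close> is attained exactly once, at \<open>m\<^sub>0(r)\<close>, which lies below \<open>k\<^sub>r\<close>
  because \<open>h (k\<^sub>r) < r\<close>; and \<open>h < 1 \<le> r\<close> when \<open>r \<ge> 1\<close>.  At the critical point the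
  equation \<open>h m = r\<close> reads \<open>1 - r - 3m = 3m (1 - 2m) ln ((1 - 2m)/m)\<close>, so
  \<open>f\<^sub>r(m\<^sub>0(r)) = 2 / (9 m\<^sub>0(r) (1 - 2 m\<^sub>0(r)))\<close>, which increases as \<open>m\<^sub>0(r)\<close> decreases
  to \<open>0\<close>.
\<close>

lemma strict_mono_on_if_deriv_pos:
  fixes f :: "real \<Rightarrow> real"
  assumes "connected S" "continuous_on S f"
    and "\<And>x. x \<in> interior S \<Longrightarrow> \<exists>y. (f has_real_derivative y) (at x) \<and> 0 < y"
  shows "strict_mono_on S f"
proof (rule strict_mono_onI)
  fix a b :: real assume ab: "a \<in> S" "b \<in> S" "a < b"
  have sub: "{a..b} \<subseteq> S"
    using connected_contains_Icc[OF assms(1) ab(1,2)] .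
  show "f a < f b"
  proof (rule DERIV_pos_imp_increasing_open[OF ab(3)])
    fix x assume "a < x" "x < b"
    then have "x \<in> interior {a..b}"
      by simp
    then show "\<exists>y. (f has_real_derivative y) (at x) \<and> 0 < y"
      using assms(3) interior_mono[OF sub] by blast
  next
    show "continuous_on {a..b} f"
      using assms(2) sub by (rule continuous_on_subset)
  qed
qed

lemma strict_antimono_on_if_deriv_neg:
  fixes f :: "real \<Rightarrow> real"
  assumes "connected S" "continuous_on S f"
    and "\<And>x. x \<in> interior S \<Longrightarrow> \<exists>y. (f has_real_derivative y) (at x) \<and> y < 0"
  shows "strict_antimono_on S f"
proof -
  have "strict_mono_on S (\<lambda>x. - f x)"
  proof (rule strict_mono_on_if_deriv_pos[OF assms(1) continuous_on_minus[OF assms(2)]])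
    fix x assume "x \<in> interior S"
    then obtain y where "(f has_real_derivative y) (at x)" "y < 0"
      using assms(3) by blast
    then show "\<exists>y. ((\<lambda>x. - f x) has_real_derivative y) (at x) \<and> 0 < y"
      using DERIV_minus by (intro exI[of _ "- y"]) auto
  qed
  then show ?thesis
    by (auto simp: monotone_on_def)
qed

definition ln_ratio :: "real \<Rightarrow> real" where
  "ln_ratio t = ln ((1 - 2 * t) / t)"

lemma ln_ratio_has_real_derivative:
  "0 < t \<Longrightarrow> t < 1/2 \<Longrightarrow> (ln_ratio has_real_derivative - 1 / (t * (1 - 2 * t))) (at t)"
  unfolding ln_ratio_def[abs_def] by (auto intro!: derivative_eq_intros simp: field_simps)

lemma isCont_ln_ratio: "0 < t \<Longrightarrow> t < 1/2 \<Longrightarrow> isCont ln_ratio t"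
  using DERIV_isCont ln_ratio_has_real_derivative by blast

lemma ln_ratio_pos: "0 < t \<Longrightarrow> t < 1/3 \<Longrightarrow> 0 < ln_ratio t"
  unfolding ln_ratio_def by (subst ln_gt_zero_iff) (auto simp: field_simps)

lemma ln_ratio_neg: "1/3 < t \<Longrightarrow> t < 1/2 \<Longrightarrow> ln_ratio t < 0"
  unfolding ln_ratio_def by (subst ln_less_zero_iff) (auto simp: field_simps)

lemma f_eq: "f r = (\<lambda>t. 2 / (3 * (1 - r - 3 * t)) * ln_ratio t)"
  by (simp add: f_def ln_ratio_def fun_eq_iff)

lemma h_eq: "h = (\<lambda>t. - 3 * t * (1 - 2 * t) * ln_ratio t - 3 * t + 1)"
  by (simp add: h_def ln_ratio_def fun_eq_iff)

lemma h_has_real_derivative: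
  assumes "0 < t" "t < 1/2"
  shows "(h has_real_derivative - 3 * ((1 - 4 * t) * ln_ratio t)) (at t)"
proof -
  have "(h has_real_derivative (- 3 * (1 - 2 * t) + (- 3 * t) * (- 2)) * ln_ratio t
      + (- 3 * t * (1 - 2 * t)) * (- 1 / (t * (1 - 2 * t))) - 3) (at t)"
    unfolding h_eq
    by (rule derivative_eq_intros ln_ratio_has_real_derivative refl | use assms in simp)+
  also have "(- 3 * (1 - 2 * t) + (- 3 * t) * (- 2)) * ln_ratio t
      + (- 3 * t * (1 - 2 * t)) * (- 1 / (t * (1 - 2 * t))) - 3 = - 3 * ((1 - 4 * t) * ln_ratio t)"
    using assms by (simp add: field_simps)
  finally show ?thesis .
qed

lemma continuous_on_h: "continuous_on {0<..<1/2} h"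
  by (intro continuous_at_imp_continuous_on ballI DERIV_isCont[OF h_has_real_derivative]) auto

lemma h_strict_antimono_on: "strict_antimono_on {0<..1/4} h"
proof (rule strict_antimono_on_if_deriv_neg)
  show "continuous_on {0<..1/4} h"
    by (rule continuous_on_subset[OF continuous_on_h]) auto
  fix t :: real assume "t \<in> interior {0<..1/4}"
  then have t: "0 < t" "t < 1/4" by auto
  then have "0 < (1 - 4 * t) * ln_ratio t"
    using ln_ratio_pos[of t] by (intro mult_pos_pos) auto
  then have "- 3 * ((1 - 4 * t) * ln_ratio t) < 0"
    by linarith
  moreover have "(h has_real_derivative - 3 * ((1 - 4 * t) * ln_ratio t)) (at t)"
    using t by (intro h_has_real_derivative) auto
  ultimately show "\<exists>y. (h has_real_derivative y) (at t) \<and> y < 0"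
    by blast
qed simp

lemma h_nonpos:
  assumes "1/4 \<le> t" "t < 1/2"
  shows "h t \<le> 0"
proof -
  have up: "strict_mono_on {1/4..1/3} h"
  proof (rule strict_mono_on_if_deriv_pos)
    show "continuous_on {1/4..1/3} h"
      by (rule continuous_on_subset[OF continuous_on_h]) auto
    fix x :: real assume "x \<in> interior {1/4..1/3}"
    then have x: "1/4 < x" "x < 1/3" by auto
    then have "(1 - 4 * x) * ln_ratio x < 0"
      using ln_ratio_pos[of x] by (intro mult_neg_pos) auto
    then have "0 < - 3 * ((1 - 4 * x) * ln_ratio x)"
      by linarith
    moreover have "(h has_real_derivative - 3 * ((1 - 4 * x) * ln_ratio x)) (at x)"
      using x by (intro h_has_real_derivative) auto
    ultimately show "\<exists>y. (h has_real_derivative y) (at x) \<and> 0 < y"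
      by blast
  qed simp
  have down: "strict_antimono_on {1/3..<1/2} h"
  proof (rule strict_antimono_on_if_deriv_neg)
    show "continuous_on {1/3..<1/2} h"
      by (rule continuous_on_subset[OF continuous_on_h]) auto
    fix x :: real assume "x \<in> interior {1/3..<1/2}"
    then have x: "1/3 < x" "x < 1/2" by auto
    then have "0 < (1 - 4 * x) * ln_ratio x"
      using ln_ratio_neg[of x] by (intro mult_neg_neg) auto
    then have "- 3 * ((1 - 4 * x) * ln_ratio x) < 0"
      by linarith
    moreover have "(h has_real_derivative - 3 * ((1 - 4 * x) * ln_ratio x)) (at x)"
      using x by (intro h_has_real_derivative) auto
    ultimately show "\<exists>y. (h has_real_derivative y) (at x) \<and> y < 0"
      by blast
  qed simp
  have third: "h (1/3) = 0"
    by (simp add: h_def)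
  show ?thesis
  proof (cases t "1/3::real" rule: linorder_cases)
    case less
    then show ?thesis
      using monotone_onD[OF up, of t "1/3"] third assms by auto
  next
    case equal
    show ?thesis
      by (simp add: equal third)
  next
    case greater
    then show ?thesis
      using monotone_onD[OF down, of "1/3" t] third assms by auto
  qed
qed

lemma h_less_one:
  assumes "0 < t" "t < 1/2"
  shows "h t < 1"
proof (cases "t < 1/4")
  case True
  then have "0 < 3 * t * (1 - 2 * t) * ln_ratio t"
    using assms ln_ratio_pos[of t] by (intro mult_pos_pos) auto
  then show ?thesis
    unfolding h_eq using assms by linarith
next
  case False
  then show ?thesis
    using h_nonpos[of t] assms by simp
qed

lemma h_tendsto_1: "(h \<longlongrightarrow> 1) (at_right 0)"
  unfolding h_eq ln_ratio_def by real_asymp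

lemma h_pos_imp_less_quarter: "0 < h m \<Longrightarrow> m < 1/2 \<Longrightarrow> m < 1/4"
  using h_nonpos[of m] by force

lemma sgn_h_diff:
  assumes "0 < h m" "0 < m" "m < 1/2" "0 < t" "t < 1/2"
  shows "sgn (h m - h t) = sgn (t - m)"
proof -
  have m: "m < 1/4"
    using assms h_pos_imp_less_quarter by blast
  consider "t < m" | "t = m" | "m < t" "t \<le> 1/4" | "1/4 < t"
    by linarith
  then show ?thesis
  proof cases
    case 1
    then have "h m < h t"
      using monotone_onD[OF h_strict_antimono_on, of t m] m assms by auto
    with 1 show ?thesis by (simp add: sgn_if)
  next
    case 3
    then have "h t < h m"
      using monotone_onD[OF h_strict_antimono_on, of m t] m assms by auto
    with 3 show ?thesis by (simp add: sgn_if)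
  next
    case 4
    then have "h t < h m"
      using h_nonpos[of t] assms by auto
    with 4 m show ?thesis by (simp add: sgn_if)
  qed simp
qed

lemma h_at_k_less:
  assumes "0 < r" "r < 1"
  shows "h (k r) < r"
proof -
  have "0 < 3 * k r * (1 - 2 * k r) * ln_ratio (k r)"
    using assms ln_ratio_pos[of "k r"] by (intro mult_pos_pos) (auto simp: k_def)
  moreover have "1 - 3 * k r = r"
    by (simp add: k_def field_simps)
  ultimately show ?thesis
    unfolding h_eq by linarith
qed

lemma h_root_exists:
  assumes "0 < r" "r < 1"
  obtains m where "0 < m" "m < k r" "h m = r"
proof -
  have k: "0 < k r" "k r < 1/3"
    using assms by (simp_all add: k_def)
  have "\<forall>\<^sub>F t in at_right 0. r < h t \<and> t \<in> {0<..<k r}"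
    using order_tendstoD(1)[OF h_tendsto_1 assms(2)] eventually_at_right_real[OF k(1)]
    by (rule eventually_conj)
  then obtain t where t: "r < h t" "0 < t" "t < k r"
    using eventually_happens'[OF trivial_limit_at_right_real] by auto
  have "continuous_on {t..k r} h"
    by (rule continuous_on_subset[OF continuous_on_h]) (use t k in auto)
  then obtain m where m: "t \<le> m" "m \<le> k r" "h m = r"
    using IVT2'[of h "k r" r t] h_at_k_less[OF assms] t by auto
  moreover have "m \<noteq> k r"
    using m h_at_k_less[OF assms] by auto
  ultimately have "0 < m" "m < k r" "h m = r"
    using t by auto
  then show thesis
    by (rule that)
qed

lemma f_has_real_derivative:
  assumes "0 < t" "t < 1/2" "1 - r - 3 * t \<noteq> 0"
  shows "(f r has_real_derivative 2 * (r - h t) / (3 * t * (1 - 2 * t) * (1 - r - 3 * t)\<^sup>2)) (at t)"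
proof -
  define D where "D = 1 - r - 3 * t"
  have D: "D \<noteq> 0"
    using assms(3) by (simp add: D_def)
  have "((\<lambda>t. 2 / (3 * (1 - r - 3 * t))) has_real_derivative
      - (2 * (3 * (0 - 0 - 3 * 1))) / (3 * (1 - r - 3 * t) * (3 * (1 - r - 3 * t)))) (at t)"
    by (rule derivative_eq_intros refl | use assms in simp)+
  then have "((\<lambda>t. 2 / (3 * (1 - r - 3 * t))) has_real_derivative 2 / D\<^sup>2) (at t)"
    unfolding D_def[symmetric] using D by (simp add: field_simps power2_eq_square)
  from DERIV_mult[OF this ln_ratio_has_real_derivative[OF assms(1,2)], folded D_def]
  have "(f r has_real_derivative 2 / D\<^sup>2 * ln_ratio t + - 1 / (t * (1 - 2 * t)) * (2 / (3 * D))) (at t)"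
    unfolding f_eq .
  also have "2 / D\<^sup>2 * ln_ratio t + - 1 / (t * (1 - 2 * t)) * (2 / (3 * D))
      = 2 * (r - h t) / (3 * t * (1 - 2 * t) * D\<^sup>2)"
  proof -
    have hr: "r - h t = 3 * t * (1 - 2 * t) * ln_ratio t - D"
      unfolding h_eq D_def by (simp add: algebra_simps)
    show ?thesis
      unfolding hr using D assms by (simp add: field_simps power2_eq_square)
  qed
  finally show ?thesis
    unfolding D_def .
qed

lemma f_has_real_derivative_sgn:
  assumes "0 < t" "t < 1/2" "1 - r - 3 * t \<noteq> 0"
  shows "\<exists>y. (f r has_real_derivative y) (at t) \<and> sgn y = sgn (r - h t)"
proof -
  have "0 < 3 * t * (1 - 2 * t) * (1 - r - 3 * t)\<^sup>2"
    using assms by (intro mult_pos_pos) auto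
  then have "sgn (2 * (r - h t) / (3 * t * (1 - 2 * t) * (1 - r - 3 * t)\<^sup>2)) = sgn (r - h t)"
    by (auto simp: sgn_if zero_less_divide_iff)
  then show ?thesis
    using f_has_real_derivative[OF assms] by blast
qed

lemma f_deriv_sgn:
  assumes "0 < r" "r < 1" "t \<in> {0<..<k r} \<union> {k r<..<1/2}"
  shows "f r differentiable (at t) \<and> sgn (deriv (f r) t) = sgn (r - h t)
    \<and> (deriv (f r) t = 0 \<longleftrightarrow> h t = r)"
proof -
  have "0 < t" "t < 1/2" "1 - r - 3 * t \<noteq> 0"
    using assms by (auto simp: k_def)
  then obtain y where y: "(f r has_real_derivative y) (at t)" "sgn y = sgn (r - h t)"
    using f_has_real_derivative_sgn by blast
  moreover have "deriv (f r) t = y"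
    using y(1) by (rule DERIV_imp_deriv)
  moreover have "y = 0 \<longleftrightarrow> h t = r"
    using y(2) by (auto simp: sgn_if split: if_splits)
  ultimately show ?thesis
    using real_differentiable_def by blast
qed

lemma continuous_on_f:
  assumes "\<And>t. t \<in> S \<Longrightarrow> 0 < t \<and> t < 1/2 \<and> 1 - r - 3 * t \<noteq> 0"
  shows "continuous_on S (f r)"
  using assms
  by (intro continuous_at_imp_continuous_on ballI DERIV_isCont[OF f_has_real_derivative]) auto

lemma f_strict_mono_on:
  assumes "\<And>t. t \<in> {a<..<b} \<Longrightarrow> 0 < t \<and> t < 1/2 \<and> 1 - r - 3 * t \<noteq> 0 \<and> h t < r"
  shows "strict_mono_on {a<..<b} (f r)"
proof (rule strict_mono_on_if_deriv_pos)
  show "continuous_on {a<..<b} (f r)"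
    using assms by (intro continuous_on_f) blast
  fix t assume "t \<in> interior {a<..<b}"
  then obtain y where "(f r has_real_derivative y) (at t)" "sgn y = sgn (r - h t)" "h t < r"
    using assms f_has_real_derivative_sgn by force
  then show "\<exists>y. (f r has_real_derivative y) (at t) \<and> 0 < y"
    by (auto simp: sgn_if split: if_splits)
qed simp

lemma f_strict_antimono_on:
  assumes "\<And>t. t \<in> {a<..<b} \<Longrightarrow> 0 < t \<and> t < 1/2 \<and> 1 - r - 3 * t \<noteq> 0 \<and> r < h t"
  shows "strict_antimono_on {a<..<b} (f r)"
proof (rule strict_antimono_on_if_deriv_neg)
  show "continuous_on {a<..<b} (f r)"
    using assms by (intro continuous_on_f) blast
  fix t assume "t \<in> interior {a<..<b}"
  then obtain y where "(f r has_real_derivative y) (at t)" "sgn y = sgn (r - h t)" "r < h t"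
    using assms f_has_real_derivative_sgn by force
  then show "\<exists>y. (f r has_real_derivative y) (at t) \<and> y < 0"
    by (auto simp: sgn_if split: if_splits)
qed simp

lemma m0_spec:
  assumes "0 < r" "r < 1"
  shows "\<exists>!t. t \<in> {0<..<k r} \<and> deriv (f r) t = 0"
    and "m0 r \<in> {0<..<k r}" "deriv (f r) (m0 r) = 0" "h (m0 r) = r"
proof -
  obtain m where m: "0 < m" "m < k r" "h m = r"
    using h_root_exists[OF assms] by blast
  have k: "k r < 1/3"
    using assms by (simp add: k_def)
  have crit: "t \<in> {0<..<k r} \<and> deriv (f r) t = 0 \<longleftrightarrow> t = m" for t
  proof
    assume t: "t \<in> {0<..<k r} \<and> deriv (f r) t = 0"
    then have "h t = h m"
      using f_deriv_sgn[OF assms, of t] m by auto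
    then show "t = m"
      using sgn_h_diff[of m t] t m k assms by (auto simp: sgn_if split: if_splits)
  qed (use f_deriv_sgn[OF assms, of m] m in auto)
  have "m0 r = m"
    unfolding m0_def crit by simp
  then show "\<exists>!t. t \<in> {0<..<k r} \<and> deriv (f r) t = 0"
    and "m0 r \<in> {0<..<k r}" "deriv (f r) (m0 r) = 0" "h (m0 r) = r"
    using crit m by auto
qed

lemma h_less_iff_m0_less:
  assumes "0 < r" "r < 1" "0 < t" "t < 1/2"
  shows "h t < r \<longleftrightarrow> m0 r < t" and "r < h t \<longleftrightarrow> t < m0 r"
proof -
  have "sgn (r - h t) = sgn (t - m0 r)"
    using sgn_h_diff[of "m0 r" t] m0_spec[OF assms(1,2)] assms by (auto simp: k_def)
  then show "h t < r \<longleftrightarrow> m0 r < t" and "r < h t \<longleftrightarrow> t < m0 r"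
    by (auto simp: sgn_if split: if_splits)
qed

lemma f_monotonicity_below_one:
  assumes "0 < r" "r < 1"
  shows "strict_antimono_on {0<..<m0 r} (f r)"
    and "strict_mono_on {m0 r<..<k r} (f r)"
    and "strict_mono_on {k r<..<1/2} (f r)"
proof -
  have m: "0 < m0 r" "m0 r < k r" "k r < 1/3"
    using m0_spec[OF assms] assms by (auto simp: k_def)
  show "strict_antimono_on {0<..<m0 r} (f r)"
    using m h_less_iff_m0_less[OF assms] by (intro f_strict_antimono_on) (auto simp: k_def)
  show "strict_mono_on {m0 r<..<k r} (f r)"
    using m h_less_iff_m0_less[OF assms] by (intro f_strict_mono_on) (auto simp: k_def)
  show "strict_mono_on {k r<..<1/2} (f r)"
    using m h_less_iff_m0_less[OF assms] by (intro f_strict_mono_on) (auto simp: k_def)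
qed

lemma f_strict_mono_from_one:
  assumes "1 \<le> r"
  shows "strict_mono_on {0<..<1/2} (f r)"
  using assms h_less_one by (intro f_strict_mono_on) fastforce

lemma f_tendsto_at_right_0: "r < 1 \<Longrightarrow> filterlim (f r) at_top (at_right 0)"
  unfolding f_eq ln_ratio_def by real_asymp

lemma f_tendsto_at_right_0_from_one:
  assumes "1 \<le> r"
  shows "filterlim (f r) at_bot (at_right 0)"
proof (cases "r = 1")
  \<comment> \<open>at \<open>r = 1\<close> the prefactor \<open>2 / (3 (1 - r - 3t))\<close> itself diverges at \<open>0\<close>\<close>
  case True
  then show ?thesis
    unfolding f_eq ln_ratio_def by simp real_asymp
next
  case False
  with assms show ?thesis
    unfolding f_eq ln_ratio_def by simp real_asymp
qed

lemma f_tendsto_at_left_half: "0 < r \<Longrightarrow> filterlim (f r) at_top (at_left (1/2))"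
  unfolding f_eq ln_ratio_def by real_asymp

lemma f_tendsto_at_k:
  assumes "0 < r" "r < 1"
  shows "filterlim (f r) at_top (at_left (k r))" "filterlim (f r) at_bot (at_right (k r))"
proof -
  have k: "0 < k r" "k r < 1/3"
    using assms by (simp_all add: k_def)
  have ln: "(ln_ratio \<longlongrightarrow> ln_ratio (k r)) (at (k r) within S)" for S
    using isCont_ln_ratio[of "k r"] k
    by (simp add: isCont_def tendsto_within_subset[OF _ subset_UNIV])
  have "filterlim (\<lambda>t. 2 / (3 * (1 - r - 3 * t))) at_top (at_left (k r))"
    unfolding k_def by real_asymp
  then show "filterlim (f r) at_top (at_left (k r))"
    unfolding f_eq by (rule filterlim_at_top_mult_tendsto_pos[OF ln ln_ratio_pos[OF k]])
  have "filterlim (\<lambda>t. 2 / (3 * (1 - r - 3 * t))) at_bot (at_right (k r))"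
    unfolding k_def by real_asymp
  then have "LIM t at_right (k r). ln_ratio t * (2 / (3 * (1 - r - 3 * t))) :> at_bot"
    using ln ln_ratio_pos[OF k] by (intro filterlim_tendsto_pos_mult_at_bot)
  then show "filterlim (f r) at_bot (at_right (k r))"
    unfolding f_eq by (simp add: mult.commute)
qed

lemma m0_strict_antimono: "strict_antimono_on {0<..<1} m0"
proof (rule monotone_onI)
  fix r1 r2 :: real assume r: "r1 \<in> {0<..<1}" "r2 \<in> {0<..<1}" "r1 < r2"
  have "h (m0 r1) < r2" "0 < m0 r1" "m0 r1 < 1/2"
    using m0_spec[of r1] r by (auto simp: k_def)
  then show "m0 r2 < m0 r1"
    using h_less_iff_m0_less(1)[of r2 "m0 r1"] r by auto
qed

lemma m0_less_quarter: "0 < r \<Longrightarrow> r < 1 \<Longrightarrow> m0 r < 1/4"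
  using m0_spec[of r] h_pos_imp_less_quarter[of "m0 r"] by (auto simp: k_def)

lemma m0_tendsto_0: "(m0 \<longlongrightarrow> 0) (at_left 1)"
proof (rule tendsto_sandwich[of "\<lambda>_. 0" m0 _ "\<lambda>r. (1 - r) / 3"])
  have "\<forall>\<^sub>F r in at_left 1. r \<in> {0<..<1::real}"
    by (rule eventually_at_left_real) simp
  then have "\<forall>\<^sub>F r in at_left 1. 0 < m0 r \<and> m0 r < (1 - r) / 3"
    by eventually_elim (use m0_spec in \<open>auto simp: k_def\<close>)
  then show "\<forall>\<^sub>F r in at_left 1. 0 \<le> m0 r" "\<forall>\<^sub>F r in at_left 1. m0 r \<le> (1 - r) / 3"
    by (auto elim: eventually_mono)
  show "((\<lambda>r. (1 - r) / 3) \<longlongrightarrow> 0) (at_left (1::real))"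
    by real_asymp
qed simp

lemma f_at_h_level:
  assumes "0 < m" "m < 1/3" "h m = r"
  shows "f r m = 2 / (9 * m * (1 - 2 * m))"
proof -
  have "1 - r - 3 * m = 3 * m * (1 - 2 * m) * ln_ratio m"
    using assms(3) unfolding h_eq by linarith
  then have "f r m = 2 / (3 * (3 * m * (1 - 2 * m) * ln_ratio m)) * ln_ratio m"
    unfolding f_eq by simp
  also have "\<dots> = 2 / (9 * m * (1 - 2 * m))"
    using assms ln_ratio_pos[of m] by (simp add: field_simps)
  finally show ?thesis .
qed

lemma f_at_m0: "0 < r \<Longrightarrow> r < 1 \<Longrightarrow> f r (m0 r) = 2 / (9 * m0 r * (1 - 2 * m0 r))"
  using m0_spec[of r] by (intro f_at_h_level) (auto simp: k_def)

lemma critical_value_strict_antimono: "strict_antimono_on {0<..1/4} (\<lambda>m::real. 2 / (9 * m * (1 - 2 * m)))"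
proof (rule monotone_onI)
  fix a b :: real assume ab: "a \<in> {0<..1/4}" "b \<in> {0<..1/4}" "a < b"
  have "b * (1 - 2 * b) - a * (1 - 2 * a) = (b - a) * (1 - 2 * (a + b))"
    by (simp add: algebra_simps)
  moreover have "0 < (b - a) * (1 - 2 * (a + b))"
    using ab by (intro mult_pos_pos) auto
  ultimately have "9 * a * (1 - 2 * a) < 9 * b * (1 - 2 * b)"
    by linarith
  then show "2 / (9 * b * (1 - 2 * b)) < 2 / (9 * a * (1 - 2 * a))"
    using ab by (intro divide_strict_left_mono mult_pos_pos) auto
qed

lemma f_at_m0_strict_mono: "strict_mono_on {0<..<1} (\<lambda>r. f r (m0 r))"
proof (rule strict_mono_onI)
  fix r1 r2 :: real assume r: "r1 \<in> {0<..<1}" "r2 \<in> {0<..<1}" "r1 < r2"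
  have "m0 r2 < m0 r1"
    using monotone_onD[OF m0_strict_antimono r] by simp
  moreover have "m0 r1 \<in> {0<..1/4}" "m0 r2 \<in> {0<..1/4}"
    using m0_spec[of r1] m0_spec[of r2] m0_less_quarter[of r1] m0_less_quarter[of r2] r by auto
  ultimately show "f r1 (m0 r1) < f r2 (m0 r2)"
    using monotone_onD[OF critical_value_strict_antimono] r by (simp add: f_at_m0)
qed

lemma f_at_m0_tendsto_top: "filterlim (\<lambda>r. f r (m0 r)) at_top (at_left 1)"
proof -
  have in_unit: "\<forall>\<^sub>F r in at_left 1. r \<in> {0<..<1::real}"
    by (rule eventually_at_left_real) simp
  then have "\<forall>\<^sub>F r in at_left 1. 0 < m0 r"
    by eventually_elim (use m0_spec in auto)
  then have "filterlim m0 (at_right 0) (at_left 1)"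
    by (rule tendsto_imp_filterlim_at_right[OF m0_tendsto_0])
  moreover have "filterlim (\<lambda>m::real. 2 / (9 * m * (1 - 2 * m))) at_top (at_right 0)"
    by real_asymp
  ultimately have "filterlim (\<lambda>r. 2 / (9 * m0 r * (1 - 2 * m0 r))) at_top (at_left 1)"
    using filterlim_compose by blast
  moreover have "\<forall>\<^sub>F r in at_left 1. 2 / (9 * m0 r * (1 - 2 * m0 r)) = f r (m0 r)"
    using in_unit by eventually_elim (simp add: f_at_m0)
  ultimately show ?thesis
    using filterlim_cong by fastforce
qed

theorem lemma5p3:
  shows
  "(\<forall>r t. 0 < r \<and> r < 1 \<and> t \<in> {0<..<k r} \<union> {k r<..<1/2} \<longrightarrow>
       f r differentiable (at t) \<and>
       sgn (deriv (f r) t) = sgn (r - h t) \<and>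
       (deriv (f r) t = 0 \<longleftrightarrow> h t = r))
 \<and> (\<forall>r. 0 < r \<and> r < 1 \<longrightarrow>
       (\<exists>!t. t \<in> {0<..<k r} \<and> deriv (f r) t = 0) \<and>
       m0 r \<in> {0<..<k r} \<and> deriv (f r) (m0 r) = 0 \<and>
       strict_antimono_on {0<..<m0 r} (f r) \<and>
       strict_mono_on {m0 r<..<k r} (f r) \<and>
       strict_mono_on {k r<..<1/2} (f r) \<and>
       filterlim (f r) at_top (at_right 0) \<and>
       filterlim (f r) at_top (at_left (k r)) \<and>
       filterlim (f r) at_top (at_left (1/2)) \<and>
       filterlim (f r) at_bot (at_right (k r)))
 \<and> (\<forall>r. 1 \<le> r \<longrightarrow>
       strict_mono_on {0<..<1/2} (f r) \<and>
       filterlim (f r) at_bot (at_right 0) \<and>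
       filterlim (f r) at_top (at_left (1/2)))
 \<and> strict_antimono_on {0<..<1} m0
 \<and> (m0 \<longlongrightarrow> 0) (at_left 1)
 \<and> strict_mono_on {0<..<1} (\<lambda>r. f r (m0 r))
 \<and> filterlim (\<lambda>r. f r (m0 r)) at_top (at_left 1)"
  using f_deriv_sgn m0_spec f_monotonicity_below_one f_tendsto_at_right_0 f_tendsto_at_k
    f_tendsto_at_left_half f_strict_mono_from_one f_tendsto_at_right_0_from_one
    m0_strict_antimono m0_tendsto_0 f_at_m0_strict_mono f_at_m0_tendsto_top
  by simp

end
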